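(* Let $p$ be an odd prime, let $W_p=U\rtimes C_p$ be the wreath product $C_2\wr C_p$, let $T$ be its center, and let $G=W_p/T=V\rtimes C$ where $V=U/T$ and $C$ is the image of $C_p$. Then the automorphism group $\mathrm{Aut}(G)$ acts transitively on $G\setminus V$.
   Context: Here $U=\mathbb{F}_2^{\,p}$ and a generator of the cyclic group $C_p$ of order $p$ acts on $U$ by cyclically permuting coordinates, and $W_p=U\rtimes C_p$. The center of $W_p$ is $T=\{(0,\dots,0),(1,\dots,1)\}\subseteq U$, so $V=U/T$ is an $\mathbb{F}_2$-vector space of dimension $p-1$ which is a normal subgroup of $G$, and $G=V\rtimes C$ with $C$ cyclic of order $p$. *)

theory Defs
  imports "HOL-Computational_Algebra.Primes" "HOL-Algebra.Coset"
begin

text \<open>U = F_2^p is modelled as the subsets of {0..<p} (indicator of the support),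
  with addition = symmetric difference.\<close>

definition symdiff :: "nat set \<Rightarrow> nat set \<Rightarrow> nat set" where
  "symdiff u v = (u - v) \<union> (v - u)"

definition cshift :: "nat \<Rightarrow> nat \<Rightarrow> nat set \<Rightarrow> nat set" where
  "cshift p a v = (\<lambda>i. (i + a) mod p) ` v"

definition wreath :: "nat \<Rightarrow> (nat set \<times> nat) monoid" where
  "wreath p = \<lparr>carrier = Pow {..<p} \<times> {..<p},
     mult = (\<lambda>(u, a) (v, b). (symdiff u (cshift p a v), (a + b) mod p)),
     one = ({}, 0)\<rparr>"

definition center :: "('a, 'b) monoid_scheme \<Rightarrow> 'a set" where
  "center G = {z \<in> carrier G. \<forall>g \<in> carrier G. z \<otimes>\<^bsub>G\<^esub> g = g \<otimes>\<^bsub>G\<^esub> z}"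

definition Gq :: "nat \<Rightarrow> (nat set \<times> nat) set monoid" where
  "Gq p = wreath p Mod center (wreath p)"

definition Vq :: "nat \<Rightarrow> (nat set \<times> nat) set set" where
  "Vq p = (\<lambda>x. center (wreath p) #>\<^bsub>wreath p\<^esub> x) ` (Pow {..<p} \<times> {0})"

end

theory Submission
  imports Defs "HOL-Number_Theory.Cong" "HOL-Algebra.Group_Action"
begin

text \<open>Let g = (u, a) with a \<noteq> 0. Scaling the index set {0..<p} by an inverse of a mod p is an
  automorphism of W_p that turns g into some (s, 1). Conjugating (s, 1) by a base element (w, 0)
  adds w + shift w to s, and these coboundaries are exactly the subsets of even cardinality.
  Since p is odd, one of s and its complement is even, so (s, 1) is conjugate to ({}, 1) or to
  ({0..<p}, 1), and these two differ by the central element ({0..<p}, 0). Automorphisms of W_p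
  preserve the centre and hence descend to G, so every element of G - V is moved to the image of
  ({}, 1), which gives transitivity.\<close>

lemma (in group) center_eq_kernel_conjugation:
  "center G = kernel G (BijGroup (carrier G)) (\<lambda>g. \<lambda>h \<in> carrier G. g \<otimes> h \<otimes> inv g)"
proof -
  have "(\<lambda>h \<in> carrier G. g \<otimes> h \<otimes> inv g) = (\<lambda>h \<in> carrier G. h) \<longleftrightarrow>
      (\<forall>h \<in> carrier G. g \<otimes> h = h \<otimes> g)" if "g \<in> carrier G" for g
    using that by (auto simp: fun_eq_iff inv_solve_right' restrict_def)
  then show ?thesis by (auto simp: center_def kernel_def BijGroup_def)
qed

lemma (in group) normal_center: "center G \<lhd> G"
  unfolding center_eq_kernel_conjugation
  using action_by_conjugation by (simp add: group_action_def group_hom.normal_kernel)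

lemma (in monoid) iso_in_center_iff:
  assumes f: "f \<in> iso G H" and z: "z \<in> carrier G"
  shows "f z \<in> center H \<longleftrightarrow> z \<in> center G"
proof -
  have hom: "f \<in> hom G H" and inj: "inj_on f (carrier G)" and surj: "carrier H = f ` carrier G"
    using f by (auto simp: iso_def bij_betw_def)
  have "f z \<in> center H \<longleftrightarrow> (\<forall>g \<in> carrier G. f z \<otimes>\<^bsub>H\<^esub> f g = f g \<otimes>\<^bsub>H\<^esub> f z)"
    using hom z unfolding center_def surj by auto
  also have "\<dots> \<longleftrightarrow> (\<forall>g \<in> carrier G. f (z \<otimes>\<^bsub>G\<^esub> g) = f (g \<otimes>\<^bsub>G\<^esub> z))"
    using hom z by (simp add: hom_mult)
  also have "\<dots> \<longleftrightarrow> z \<in> center G"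
    using z inj by (auto simp: center_def inj_on_eq_iff)
  finally show ?thesis .
qed

lemma (in monoid) iso_image_center:
  assumes f: "f \<in> iso G H"
  shows "f ` center G = center H"
proof
  show "f ` center G \<subseteq> center H"
    using iso_in_center_iff[OF f] by (auto simp: center_def)
next
  show "center H \<subseteq> f ` center G"
  proof
    fix y assume y: "y \<in> center H"
    then obtain z where "z \<in> carrier G" "y = f z"
      using f by (auto simp: center_def iso_def bij_betw_def)
    with y show "y \<in> f ` center G" using iso_in_center_iff[OF f] by blast
  qed
qed

lemma (in normal) iso_Mod_of_invariant:
  assumes f: "f \<in> iso G G" and fH: "f ` H = H"
  shows "(\<lambda>X. f ` X) \<in> iso (G Mod H) (G Mod H)"
    and "\<And>x. x \<in> carrier G \<Longrightarrow> f ` (H #> x) = H #> f x"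
proof -
  have hom: "f \<in> hom G G" and inj: "inj_on f (carrier G)" and surj: "f ` carrier G = carrier G"
    using f by (auto simp: iso_def bij_betw_def)
  show rcos: "f ` (H #> x) = H #> f x" if "x \<in> carrier G" for x
    using coset_hom(2)[OF hom subset that] fH by simp
  have sub: "X \<subseteq> carrier G" if "X \<in> rcosets H" for X
    using that rcosets_part_G[OF subgroup_axioms] by blast
  have onto: "(\<lambda>X. f ` X) ` (rcosets H) = rcosets H"
  proof
    show "(\<lambda>X. f ` X) ` (rcosets H) \<subseteq> rcosets H"
      using rcos hom_in_carrier[OF hom] by (fastforce simp: RCOSETS_def)
    show "rcosets H \<subseteq> (\<lambda>X. f ` X) ` (rcosets H)"
    proof
      fix Y assume "Y \<in> rcosets H"
      then obtain y where "y \<in> carrier G" "Y = H #> y"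
        by (auto simp: RCOSETS_def)
      moreover from \<open>y \<in> carrier G\<close> obtain x where "x \<in> carrier G" "y = f x"
        using surj by blast
      ultimately show "Y \<in> (\<lambda>X. f ` X) ` (rcosets H)"
        using rcos by (auto simp: RCOSETS_def)
    qed
  qed
  have "(\<lambda>X. f ` X) \<in> hom (G Mod H) (G Mod H)"
  proof (rule homI)
    fix X Y assume "X \<in> carrier (G Mod H)" "Y \<in> carrier (G Mod H)"
    then show "f ` (X \<otimes>\<^bsub>G Mod H\<^esub> Y) = f ` X \<otimes>\<^bsub>G Mod H\<^esub> f ` Y"
      using set_mult_hom[OF hom] sub by (simp add: FactGroup_def)
  qed (use onto in \<open>auto simp: FactGroup_def\<close>)
  moreover have "inj_on (\<lambda>X. f ` X) (rcosets H)"
    using sub inj by (auto intro: inj_onI simp: inj_on_image_eq_iff)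
  ultimately show "(\<lambda>X. f ` X) \<in> iso (G Mod H) (G Mod H)"
    using onto by (simp add: iso_def bij_betw_def FactGroup_def)
qed

lemma (in group) inner_iso:
  assumes h: "h \<in> carrier G"
  shows "(\<lambda>x. h \<otimes> x \<otimes> inv h) \<in> iso G G"
proof -
  have "(\<lambda>x. h \<otimes> x \<otimes> inv h) \<in> hom G G"
  proof (rule homI)
    fix x y assume "x \<in> carrier G" "y \<in> carrier G"
    then show "h \<otimes> (x \<otimes> y) \<otimes> inv h = h \<otimes> x \<otimes> inv h \<otimes> (h \<otimes> y \<otimes> inv h)"
      using h by (simp add: m_assoc inv_solve_left)
  qed (use h in simp)
  moreover have "bij_betw (\<lambda>x. h \<otimes> x \<otimes> inv h) (carrier G) (carrier G)"
    using conjugation_is_bij[OF h] by (simp add: bij_betw_restrict_eq)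
  ultimately show ?thesis by (simp add: iso_def)
qed

lemma (in group) iso_transitive_via_common_image:
  assumes to_c: "\<And>x. x \<in> S \<Longrightarrow> \<exists>\<phi> \<in> iso G G. \<phi> x = c"
    and S: "S \<subseteq> carrier G" and x: "x \<in> S" and y: "y \<in> S"
  shows "\<exists>\<phi> \<in> iso G G. \<phi> x = y"
proof -
  obtain \<phi> \<psi> where \<phi>: "\<phi> \<in> iso G G" "\<phi> x = c" and \<psi>: "\<psi> \<in> iso G G" "\<psi> y = c"
    using to_c x y by meson
  have "inj_on \<psi> (carrier G)" using \<psi>(1) by (auto simp: iso_def bij_betw_def)
  then have "inv_into (carrier G) \<psi> c = y" using \<psi>(2) y S by (auto intro: inv_into_f_eq)
  then have "(inv_into (carrier G) \<psi> \<circ> \<phi>) x = y" using \<phi>(2) by simp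
  moreover have "inv_into (carrier G) \<psi> \<circ> \<phi> \<in> iso G G"
    by (rule iso_set_trans[OF \<phi>(1) iso_set_sym[OF \<psi>(1)]])
  ultimately show ?thesis by blast
qed

lemma symdiff_image:
  assumes "inj_on f A" "v \<subseteq> A" "w \<subseteq> A"
  shows "f ` symdiff v w = symdiff (f ` v) (f ` w)"
proof -
  have "f ` (v - w) = f ` v - f ` w" "f ` (w - v) = f ` w - f ` v"
    using assms by (auto dest: inj_onD)
  then show ?thesis unfolding symdiff_def by (simp add: image_Un)
qed

lemma symdiff_assoc: "symdiff (symdiff u v) w = symdiff u (symdiff v w)"
  by (auto simp: symdiff_def)

lemma symdiff_commute: "symdiff u v = symdiff v u"
  by (auto simp: symdiff_def)

lemma symdiff_self [simp]: "symdiff u u = {}"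
  by (auto simp: symdiff_def)

lemma symdiff_empty [simp]: "symdiff {} u = u" "symdiff u {} = u"
  by (auto simp: symdiff_def)

lemma symdiff_symdiff_swap:
  "symdiff (symdiff u v) (symdiff w z) = symdiff (symdiff u w) (symdiff v z)"
  by (auto simp: symdiff_def)

lemma inj_on_add_mod: "inj_on (\<lambda>i. (i + a) mod p) {..<(p::nat)}"
proof (rule inj_onI)
  fix i j assume "i \<in> {..<p}" "j \<in> {..<p}" "(i + a) mod p = (j + a) mod p"
  then have "[i + a = j + a] (mod p)" by (simp add: cong_def)
  then have "[i = j] (mod p)" by (simp add: cong_add_rcancel_nat)
  with \<open>i \<in> {..<p}\<close> \<open>j \<in> {..<p}\<close> show "i = j" by (simp add: cong_def)
qed

lemma cshift_subset: "0 < p \<Longrightarrow> cshift p a v \<subseteq> {..<p}"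
  unfolding cshift_def by auto

lemma cshift_symdiff:
  "v \<subseteq> {..<p} \<Longrightarrow> w \<subseteq> {..<p} \<Longrightarrow>
   cshift p a (symdiff v w) = symdiff (cshift p a v) (cshift p a w)"
  unfolding cshift_def by (rule symdiff_image[OF inj_on_add_mod])

lemma cshift_cshift: "cshift p a (cshift p b w) = cshift p ((a + b) mod p) w"
  unfolding cshift_def image_image by (rule image_cong) (auto simp: mod_simps ac_simps)

lemma cshift_0: "v \<subseteq> {..<p} \<Longrightarrow> cshift p 0 v = v"
  unfolding cshift_def by (auto simp: subset_iff image_iff)

lemma cshift_lessThan: "0 < p \<Longrightarrow> cshift p a {..<p} = {..<p}"
  unfolding cshift_def by (rule endo_inj_surj) (auto intro: inj_on_add_mod)

lemma cshift_1_lessThan: "j < p \<Longrightarrow> cshift p 1 {..<j} = {1..j}"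
proof -
  assume "j < p"
  then have "cshift p 1 {..<j} = Suc ` {..<j}" unfolding cshift_def by (intro image_cong) auto
  then show ?thesis by (simp add: image_Suc_lessThan)
qed

text \<open>The coboundary w + shift w of {0..<j} is {0, j}; adding these one point at a time reaches
  every set up to a parity correction at 0.\<close>

lemma exists_symdiff_cshift_eq:
  assumes "t \<subseteq> {..<p}"
  shows "\<exists>w \<subseteq> {..<p}. symdiff w (cshift p 1 w) = (if even (card t) then t else symdiff t {0})"
proof -
  have "finite t" using assms finite_subset by blast
  then show ?thesis using assms
  proof (induction t rule: finite_induct)
    case empty
    show ?case by (intro exI[of _ "{}"]) (simp add: cshift_def)
  next
    case (insert j t)
    then obtain w where w: "w \<subseteq> {..<p}"
      "symdiff w (cshift p 1 w) = (if even (card t) then t else symdiff t {0})"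
      by auto
    have j: "j < p" using insert by auto
    have seg: "symdiff {..<j} (cshift p 1 {..<j}) = symdiff {0} {j}"
      unfolding cshift_1_lessThan[OF j] symdiff_def by auto
    let ?w = "symdiff w {..<j}"
    have "cshift p 1 ?w = symdiff (cshift p 1 w) (cshift p 1 {..<j})"
      using w(1) j by (intro cshift_symdiff) auto
    then have "symdiff ?w (cshift p 1 ?w)
        = symdiff (symdiff w (cshift p 1 w)) (symdiff {..<j} (cshift p 1 {..<j}))"
      by (simp only: symdiff_symdiff_swap)
    also have "\<dots> = (if even (card (insert j t)) then insert j t else symdiff (insert j t) {0})"
      unfolding seg w(2) using insert(1,2) by (auto simp: symdiff_def)
    finally show ?case using w(1) j by (intro exI[of _ ?w]) (auto simp: symdiff_def)
  qed
qed

lemma wreath_carrier: "carrier (wreath p) = Pow {..<p} \<times> {..<p}"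
  by (simp add: wreath_def)

lemma wreath_mult:
  "(u, a) \<otimes>\<^bsub>wreath p\<^esub> (v, b) = (symdiff u (cshift p a v), (a + b) mod p)"
  by (simp add: wreath_def)

lemma wreath_one: "\<one>\<^bsub>wreath p\<^esub> = ({}, 0)"
  by (simp add: wreath_def)

lemma wreath_group:
  assumes p: "0 < p"
  shows "group (wreath p)"
proof (rule groupI)
  fix x y assume "x \<in> carrier (wreath p)" "y \<in> carrier (wreath p)"
  then show "x \<otimes>\<^bsub>wreath p\<^esub> y \<in> carrier (wreath p)"
    using p cshift_subset[OF p]
    by (cases x; cases y) (auto simp: wreath_carrier wreath_mult symdiff_def)
next
  show "\<one>\<^bsub>wreath p\<^esub> \<in> carrier (wreath p)"
    using p by (simp add: wreath_carrier wreath_one)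
next
  fix x y z
  assume "x \<in> carrier (wreath p)" "y \<in> carrier (wreath p)" "z \<in> carrier (wreath p)"
  then obtain u a v b w c where xyz: "x = (u, a)" "y = (v, b)" "z = (w, c)"
    and uvw: "u \<subseteq> {..<p}" "v \<subseteq> {..<p}" "w \<subseteq> {..<p}"
    by (auto simp: wreath_carrier)
  have "cshift p a (symdiff v (cshift p b w))
      = symdiff (cshift p a v) (cshift p ((a + b) mod p) w)"
    using uvw cshift_subset[OF p] by (simp add: cshift_symdiff cshift_cshift)
  then show "x \<otimes>\<^bsub>wreath p\<^esub> y \<otimes>\<^bsub>wreath p\<^esub> z = x \<otimes>\<^bsub>wreath p\<^esub> (y \<otimes>\<^bsub>wreath p\<^esub> z)"
    by (simp add: xyz wreath_mult symdiff_assoc mod_simps ac_simps)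
next
  fix x assume "x \<in> carrier (wreath p)"
  then show "\<one>\<^bsub>wreath p\<^esub> \<otimes>\<^bsub>wreath p\<^esub> x = x"
    by (auto simp: wreath_carrier wreath_one wreath_mult cshift_0)
next
  fix x assume "x \<in> carrier (wreath p)"
  then obtain u a where x: "x = (u, a)" "u \<subseteq> {..<p}" "a < p"
    by (auto simp: wreath_carrier)
  let ?y = "(cshift p ((p - a) mod p) u, (p - a) mod p)"
  have "?y \<in> carrier (wreath p)" using p cshift_subset[OF p] by (auto simp: wreath_carrier)
  moreover have "?y \<otimes>\<^bsub>wreath p\<^esub> x = \<one>\<^bsub>wreath p\<^esub>"
    using x p by (simp add: wreath_mult wreath_one mod_simps)
  ultimately show "\<exists>y\<in>carrier (wreath p). y \<otimes>\<^bsub>wreath p\<^esub> x = \<one>\<^bsub>wreath p\<^esub>" by blast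
qed

lemma wreath_conj_base:
  assumes p: "0 < p" and w: "w \<subseteq> {..<p}" and s: "(s, a) \<in> carrier (wreath p)"
  shows "(w, 0) \<otimes>\<^bsub>wreath p\<^esub> (s, a) \<otimes>\<^bsub>wreath p\<^esub> inv\<^bsub>wreath p\<^esub> (w, 0)
       = (symdiff (symdiff w s) (cshift p a w), a)"
proof -
  interpret W: group "wreath p" using wreath_group p by simp
  have "inv\<^bsub>wreath p\<^esub> (w, 0) = (w, 0)"
    using w p by (intro W.inv_equality) (auto simp: wreath_mult wreath_one cshift_0 wreath_carrier)
  then show ?thesis using w s by (simp add: wreath_mult wreath_carrier cshift_0)
qed

lemma wreath_lessThan_central:
  assumes p: "0 < p"
  shows "({..<p}, 0) \<in> center (wreath p)"
proof -
  have "({..<p}, 0) \<otimes>\<^bsub>wreath p\<^esub> g = g \<otimes>\<^bsub>wreath p\<^esub> ({..<p}, 0)"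
    if "g \<in> carrier (wreath p)" for g
    using that p by (auto simp: wreath_carrier wreath_mult cshift_0 cshift_lessThan symdiff_commute)
  then show ?thesis using p by (auto simp: center_def wreath_carrier)
qed

definition wreath_scale :: "nat \<Rightarrow> nat \<Rightarrow> nat set \<times> nat \<Rightarrow> nat set \<times> nat" where
  "wreath_scale p k = (\<lambda>(u, a). ((\<lambda>i. k * i mod p) ` u, k * a mod p))"

lemma mult_mod_inverse_cancel:
  fixes k k' p i :: nat
  assumes "[k * k' = 1] (mod p)" and "i < p"
  shows "k' * (k * i mod p) mod p = i"
proof -
  have "k' * (k * i mod p) mod p = (k * k' mod p) * i mod p" by (simp add: mod_simps ac_simps)
  also have "\<dots> = 1 mod p * i mod p" using assms(1) by (simp add: cong_def)
  also have "\<dots> = i" using assms(2) by (cases "p = 1") auto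
  finally show ?thesis .
qed

lemma wreath_scale_carrier:
  "0 < p \<Longrightarrow> x \<in> carrier (wreath p) \<Longrightarrow> wreath_scale p k x \<in> carrier (wreath p)"
  by (auto simp: wreath_carrier wreath_scale_def)

lemma wreath_scale_cancel:
  assumes "[k * k' = 1] (mod p)" and "x \<in> carrier (wreath p)"
  shows "wreath_scale p k' (wreath_scale p k x) = x"
proof -
  obtain u a where x: "x = (u, a)" "u \<subseteq> {..<p}" "a < p"
    using assms(2) by (auto simp: wreath_carrier)
  have "(\<lambda>i. k' * i mod p) ` (\<lambda>i. k * i mod p) ` u = u"
    unfolding image_image using x(2) mult_mod_inverse_cancel[OF assms(1)]
    by (auto simp: image_iff subset_iff)
  then show ?thesis using x mult_mod_inverse_cancel[OF assms(1)] by (simp add: wreath_scale_def)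
qed

lemma wreath_scale_hom:
  assumes p: "0 < p" and k: "coprime k p"
  shows "wreath_scale p k \<in> hom (wreath p) (wreath p)"
proof (rule homI)
  fix x assume "x \<in> carrier (wreath p)"
  then show "wreath_scale p k x \<in> carrier (wreath p)" using wreath_scale_carrier p by blast
next
  fix x y assume "x \<in> carrier (wreath p)" "y \<in> carrier (wreath p)"
  then obtain u a v b where xy: "x = (u, a)" "y = (v, b)" "u \<subseteq> {..<p}" "v \<subseteq> {..<p}"
    by (auto simp: wreath_carrier)
  obtain k' where "[k * k' = 1] (mod p)"
    using k cong_solve_coprime_nat by fastforce
  then have inj: "inj_on (\<lambda>i. k * i mod p) {..<p}"
    by (intro inj_on_inverseI[where g = "\<lambda>i. k' * i mod p"]) (simp add: mult_mod_inverse_cancel)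
  have "(\<lambda>i. k * i mod p) ` cshift p a v = cshift p (k * a mod p) ((\<lambda>i. k * i mod p) ` v)"
    unfolding cshift_def image_image by (rule image_cong) (auto simp: mod_simps algebra_simps)
  moreover have "(\<lambda>i. k * i mod p) ` symdiff u (cshift p a v)
      = symdiff ((\<lambda>i. k * i mod p) ` u) ((\<lambda>i. k * i mod p) ` cshift p a v)"
    using xy cshift_subset[OF p] by (intro symdiff_image[OF inj]) auto
  moreover have "k * ((a + b) mod p) mod p = (k * a mod p + k * b mod p) mod p"
    by (simp add: mod_simps algebra_simps)
  ultimately show "wreath_scale p k (x \<otimes>\<^bsub>wreath p\<^esub> y)
      = wreath_scale p k x \<otimes>\<^bsub>wreath p\<^esub> wreath_scale p k y"
    by (simp add: xy wreath_mult wreath_scale_def)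
qed

lemma wreath_scale_iso:
  assumes p: "0 < p" and k: "coprime k p"
  shows "wreath_scale p k \<in> iso (wreath p) (wreath p)"
proof -
  obtain k' where kk': "[k * k' = 1] (mod p)"
    using k cong_solve_coprime_nat by fastforce
  moreover have "[k' * k = 1] (mod p)" using kk' by (simp add: ac_simps)
  ultimately have "bij_betw (wreath_scale p k) (carrier (wreath p)) (carrier (wreath p))"
    by (intro bij_betw_byWitness[where f' = "wreath_scale p k'"])
      (use wreath_scale_cancel wreath_scale_carrier[OF p] in auto)
  then show ?thesis using wreath_scale_hom[OF assms] by (simp add: iso_def)
qed

lemma wreath_iso_to_rotation_one:
  assumes p: "prime p" and g: "g \<in> carrier (wreath p)" and g0: "snd g \<noteq> 0"
  shows "\<exists>f \<in> iso (wreath p) (wreath p). \<exists>s \<subseteq> {..<p}. f g = (s, 1)"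
proof -
  have p0: "0 < p" using p prime_gt_0_nat by blast
  obtain u a where ua: "g = (u, a)" "u \<subseteq> {..<p}" "a < p" "a \<noteq> 0"
    using g g0 by (auto simp: wreath_carrier)
  then have "\<not> p dvd a" by (auto dest: dvd_imp_le)
  then have "coprime a p" using p by (metis coprime_commute prime_imp_coprime)
  then obtain k where ak: "[a * k = 1] (mod p)" by (auto simp: coprime_iff_invertible_nat)
  then have "coprime k p" by (auto simp: coprime_iff_invertible_nat ac_simps)
  then have "wreath_scale p k \<in> iso (wreath p) (wreath p)" by (rule wreath_scale_iso[OF p0])
  moreover have "k * a mod p = 1"
    using ak prime_gt_1_nat[OF p] by (simp add: cong_def ac_simps)
  then have "wreath_scale p k g = ((\<lambda>i. k * i mod p) ` u, 1)"
    by (simp add: ua wreath_scale_def)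
  moreover have "(\<lambda>i. k * i mod p) ` u \<subseteq> {..<p}" using p0 by auto
  ultimately show ?thesis by blast
qed

lemma wreath_iso_to_empty_or_full:
  assumes p: "1 < p" "odd p" and s: "s \<subseteq> {..<p}"
  shows "\<exists>f \<in> iso (wreath p) (wreath p). f (s, 1) = ({}, 1) \<or> f (s, 1) = ({..<p}, 1)"
proof -
  interpret W: group "wreath p" using wreath_group p by simp
  define t where "t = (if even (card s) then s else {..<p} - s)"
  have t: "t \<subseteq> {..<p}" using s by (auto simp: t_def)
  have "even (card t)"
  proof (cases "even (card s)")
    case False
    have "card ({..<p} - s) = p - card s" using s by (simp add: card_Diff_subset finite_subset)
    moreover have "card s \<le> p" using s card_mono[of "{..<p}" s] by simp
    ultimately show ?thesis using False p(2) by (simp add: t_def)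
  qed (simp add: t_def)
  then obtain w where w: "w \<subseteq> {..<p}" "symdiff w (cshift p 1 w) = t"
    using exists_symdiff_cshift_eq[OF t] by auto
  define c where "c x = (w, 0) \<otimes>\<^bsub>wreath p\<^esub> x \<otimes>\<^bsub>wreath p\<^esub> inv\<^bsub>wreath p\<^esub> (w, 0)" for x
  have "c \<in> iso (wreath p) (wreath p)"
    unfolding c_def by (rule W.inner_iso) (use w p in \<open>simp add: wreath_carrier\<close>)
  moreover have "c (s, 1) = (symdiff s t, 1)"
    using wreath_conj_base[of p w s 1] w s p by (auto simp: c_def wreath_carrier symdiff_def)
  moreover have "symdiff s t = {} \<or> symdiff s t = {..<p}"
    using s by (auto simp: t_def symdiff_def)
  ultimately show ?thesis by metis
qed

lemma wreath_center_coset_full_eq_empty: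
  assumes p: "1 < p"
  shows "center (wreath p) #>\<^bsub>wreath p\<^esub> ({..<p}, 1) = center (wreath p) #>\<^bsub>wreath p\<^esub> ({}, 1)"
proof -
  interpret W: group "wreath p" using wreath_group p by simp
  interpret Z: normal "center (wreath p)" "wreath p" by (rule W.normal_center)
  have z: "({..<p}, 0) \<in> center (wreath p)" using p by (simp add: wreath_lessThan_central)
  then have zc: "({..<p}, 0) \<in> carrier (wreath p)" using Z.subset by blast
  have "({..<p}, 1) = ({..<p}, 0) \<otimes>\<^bsub>wreath p\<^esub> ({}, 1)"
    using p by (simp add: wreath_mult cshift_def)
  also have "center (wreath p) #>\<^bsub>wreath p\<^esub> \<dots>
      = (center (wreath p) #>\<^bsub>wreath p\<^esub> ({..<p}, 0)) #>\<^bsub>wreath p\<^esub> ({}, 1)"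
    using W.coset_mult_assoc[OF Z.subset zc] p by (simp add: wreath_carrier)
  also have "center (wreath p) #>\<^bsub>wreath p\<^esub> ({..<p}, 0) = center (wreath p)"
    by (rule W.coset_join2[OF zc Z.subgroup_axioms z])
  finally show ?thesis .
qed

lemma wreath_iso_to_center_coset:
  assumes p: "prime p" "odd p" and g: "g \<in> carrier (wreath p)" and g0: "snd g \<noteq> 0"
  shows "\<exists>f \<in> iso (wreath p) (wreath p).
           center (wreath p) #>\<^bsub>wreath p\<^esub> f g = center (wreath p) #>\<^bsub>wreath p\<^esub> ({}, 1)"
proof -
  have p1: "1 < p" using p prime_gt_1_nat by blast
  obtain f s where f: "f \<in> iso (wreath p) (wreath p)" and s: "s \<subseteq> {..<p}" "f g = (s, 1)"
    using wreath_iso_to_rotation_one[OF p(1) g g0] by blast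
  obtain h where h: "h \<in> iso (wreath p) (wreath p)" and hs: "h (s, 1) = ({}, 1) \<or> h (s, 1) = ({..<p}, 1)"
    using wreath_iso_to_empty_or_full[OF p1 p(2) s(1)] by blast
  have "h \<circ> f \<in> iso (wreath p) (wreath p)" by (rule iso_set_trans[OF f h])
  moreover have "(h \<circ> f) g = ({}, 1) \<or> (h \<circ> f) g = ({..<p}, 1)"
    using hs s(2) by simp
  then have "center (wreath p) #>\<^bsub>wreath p\<^esub> (h \<circ> f) g = center (wreath p) #>\<^bsub>wreath p\<^esub> ({}, 1)"
    using wreath_center_coset_full_eq_empty[OF p1] by (elim disjE) simp_all
  ultimately show ?thesis by blast
qed

lemma Gq_carrier: "carrier (Gq p) = rcosets\<^bsub>wreath p\<^esub> (center (wreath p))"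
  by (simp add: Gq_def FactGroup_def)

lemma Gq_iso_to_base_coset:
  assumes p: "prime p" "odd p" and x: "x \<in> carrier (Gq p) - Vq p"
  shows "\<exists>\<phi> \<in> iso (Gq p) (Gq p). \<phi> x = center (wreath p) #>\<^bsub>wreath p\<^esub> ({}, 1)"
proof -
  interpret W: group "wreath p" using wreath_group p prime_gt_0_nat by simp
  interpret Z: normal "center (wreath p)" "wreath p" by (rule W.normal_center)
  obtain g where g: "g \<in> carrier (wreath p)" "x = center (wreath p) #>\<^bsub>wreath p\<^esub> g"
    using x by (auto simp: Gq_carrier RCOSETS_def)
  have "snd g \<noteq> 0"
  proof
    assume "snd g = 0"
    then have "x \<in> Vq p" using g by (cases g) (auto simp: wreath_carrier Vq_def)
    then show False using x by simp
  qed
  then obtain f where f: "f \<in> iso (wreath p) (wreath p)"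
    and fg: "center (wreath p) #>\<^bsub>wreath p\<^esub> f g = center (wreath p) #>\<^bsub>wreath p\<^esub> ({}, 1)"
    using wreath_iso_to_center_coset[OF p g(1)] by blast
  note lift = Z.iso_Mod_of_invariant[OF f W.iso_image_center[OF f]]
  have "(\<lambda>X. f ` X) \<in> iso (Gq p) (Gq p)" unfolding Gq_def by (rule lift(1))
  moreover have "f ` x = center (wreath p) #>\<^bsub>wreath p\<^esub> ({}, 1)"
    using lift(2)[OF g(1)] g(2) fg by simp
  ultimately show ?thesis by blast
qed

theorem lemma2:
  fixes p :: nat
  assumes "prime p" and "odd p"
  shows "\<forall>x \<in> carrier (Gq p) - Vq p. \<forall>y \<in> carrier (Gq p) - Vq p.
           \<exists>\<phi> \<in> iso (Gq p) (Gq p). \<phi> x = y"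
proof -
  interpret W: group "wreath p" using wreath_group assms prime_gt_0_nat by simp
  interpret Z: normal "center (wreath p)" "wreath p" by (rule W.normal_center)
  interpret Q: group "Gq p" unfolding Gq_def by (rule Z.factorgroup_is_group)
  show ?thesis
  proof (intro ballI)
    fix x y assume x: "x \<in> carrier (Gq p) - Vq p" and y: "y \<in> carrier (Gq p) - Vq p"
    show "\<exists>\<phi> \<in> iso (Gq p) (Gq p). \<phi> x = y"
      by (rule Q.iso_transitive_via_common_image[OF _ Diff_subset x y])
        (erule Gq_iso_to_base_coset[OF assms])
  qed
qed

end
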